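(* Let $f_\mu:\mathbb{R}^d\to[0,\infty)$ be measurable and satisfy $$\sum_{r\ge1}r^{d-1}\sup_{x\in\mathbb{R}^d\setminus B(0,r-1)}f_\mu(x)<\infty.$$ Then there exists a constant $C>0$ such that for every affine hyperplane $\mathcal H\subset\mathbb{R}^d$, $$\int_{\mathcal H}f_\mu(x)\,d\mathcal H^{d-1}(x)\le C.$$
   Context: $\mathcal H^{d-1}$ denotes the $(d-1)$-dimensional Hausdorff measure on $\mathbb{R}^d$; $B(0,r)$ is the Euclidean ball of radius $r$ centered at $0$. *)

theory Defs
  imports "HOL-Analysis.Analysis"
begin

definition unit_ball_vol :: "nat \<Rightarrow> real" where
  "unit_ball_vol s = pi powr (real s / 2) / Gamma (real s / 2 + 1)"

text \<open>Cost of a covering set in the s-dimensional Hausdorff premeasure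
  (empty sets cost nothing, so that nat-indexed covers model countable covers).\<close>
definition hcost :: "nat \<Rightarrow> 'a::metric_space set \<Rightarrow> ennreal" where
  "hcost s C = (if C = {} then 0 else ennreal (unit_ball_vol s * (diameter C / 2) ^ s))"

definition hausdorff_pre :: "nat \<Rightarrow> real \<Rightarrow> 'a::metric_space set \<Rightarrow> ennreal" where
  "hausdorff_pre s \<delta> A =
     (INF C \<in> {C :: nat \<Rightarrow> 'a set. A \<subseteq> (\<Union>i. C i) \<and>
                  (\<forall>i. bounded (C i) \<and> diameter (C i) \<le> \<delta>)}.
        (\<Sum>i. hcost s (C i)))"

definition hausdorff_outer :: "nat \<Rightarrow> 'a::metric_space set \<Rightarrow> ennreal" where
  "hausdorff_outer s A = (SUP \<delta> \<in> {0<..}. hausdorff_pre s \<delta> A)"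

definition hausdorff_measure :: "nat \<Rightarrow> 'a::metric_space measure" where
  "hausdorff_measure s =
     measure_of UNIV (lambda_system UNIV UNIV (hausdorff_outer s)) (hausdorff_outer s)"

end

(* Let c n be the supremum of f outside the ball of radius n and let H be a hyperplane with normal
   vector a. Grid the coordinates other than one where |a| is largest into cubes of side \<epsilon>: H is
   a graph over them, so each cube lifts to a piece of H of diameter at most d^2 \<epsilon>, and
   H \<inter> B(0, R) is covered by (2R/\<epsilon> + 4)^(d-1) such pieces. This gives
   H^(d-1)(H \<inter> B(0, n+1)) \<le> K (n+1)^(d-1) with K independent of H. The part of H where f
   exceeds c (n+1) lies in B(0, n+1), so a layer-cake decomposition bounds the integral of f over H
   by the sum of c n K (n+1)^(d-1), which converges by assumption. *)

theory Submission
  imports Defs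
begin

lemma unit_ball_vol_nonneg: "unit_ball_vol s \<ge> 0"
  unfolding unit_ball_vol_def by (intro divide_nonneg_pos) auto

lemma hausdorff_pre_le_cover:
  assumes "A \<subseteq> (\<Union>i. C i)" "\<And>i. bounded (C i)" "\<And>i. diameter (C i) \<le> \<delta>"
  shows "hausdorff_pre s \<delta> A \<le> (\<Sum>i. hcost s (C i))"
  unfolding hausdorff_pre_def by (rule INF_lower) (use assms in auto)

lemma hausdorff_outer_mono:
  assumes "A \<subseteq> B"
  shows "hausdorff_outer s A \<le> hausdorff_outer s B"
  unfolding hausdorff_outer_def hausdorff_pre_def
  by (intro SUP_mono' INF_superset_mono) (use assms in auto)

lemma emeasure_hausdorff_le_outer:
  "emeasure (hausdorff_measure s) A \<le> hausdorff_outer s A"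
  unfolding hausdorff_measure_def emeasure_measure_of_conv by auto

lemma hausdorff_pre_le_finite_cover:
  assumes F: "finite F" and cover: "A \<subseteq> (\<Union>\<kappa>\<in>F. Q \<kappa>)"
    and Q: "\<And>\<kappa>. \<kappa> \<in> F \<Longrightarrow> bounded (Q \<kappa>) \<and> diameter (Q \<kappa>) \<le> \<rho>"
    and \<rho>: "0 \<le> \<rho>" "\<rho> \<le> \<delta>"
  shows "hausdorff_pre s \<delta> A \<le> ennreal (real (card F) * unit_ball_vol s * (\<rho> / 2) ^ s)"
proof -
  obtain h where h: "bij_betw h {..<card F} F"
    using ex_bij_betw_nat_finite[OF F] by (auto simp: atLeast0LessThan)
  define C where "C i = (if i < card F then Q (h i) else {})" for i
  have C_range: "i < card F \<Longrightarrow> h i \<in> F" for i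
    using h by (auto simp: bij_betw_def)
  have "A \<subseteq> (\<Union>i. C i)"
  proof
    fix x assume "x \<in> A"
    then obtain \<kappa> where "\<kappa> \<in> F" "x \<in> Q \<kappa>" using cover by blast
    moreover obtain i where "i < card F" "h i = \<kappa>"
      using h \<open>\<kappa> \<in> F\<close> by (metis bij_betw_iff_bijections lessThan_iff)
    ultimately show "x \<in> (\<Union>i. C i)" by (auto simp: C_def)
  qed
  moreover have "bounded (C i) \<and> diameter (C i) \<le> \<rho>" for i
    using Q[OF C_range] \<rho> by (auto simp: C_def)
  ultimately have "hausdorff_pre s \<delta> A \<le> (\<Sum>i. hcost s (C i))"
    using \<rho> by (intro hausdorff_pre_le_cover) (auto intro: order_trans)
  also have "\<dots> = (\<Sum>i<card F. hcost s (C i))"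
    by (rule suminf_finite) (auto simp: C_def hcost_def)
  also have "\<dots> \<le> (\<Sum>i<card F. ennreal (unit_ball_vol s * (\<rho> / 2) ^ s))"
  proof (intro sum_mono)
    fix i assume "i \<in> {..<card F}"
    then have "bounded (C i)" "diameter (C i) \<le> \<rho>"
      using Q[OF C_range] by (auto simp: C_def)
    then have "(diameter (C i) / 2) ^ s \<le> (\<rho> / 2) ^ s"
      by (intro power_mono) (auto simp: diameter_ge_0)
    then show "hcost s (C i) \<le> ennreal (unit_ball_vol s * (\<rho> / 2) ^ s)"
      by (auto simp: hcost_def unit_ball_vol_nonneg intro!: ennreal_leI mult_left_mono)
  qed
  also have "\<dots> = ennreal (real (card F) * unit_ball_vol s * (\<rho> / 2) ^ s)"
    using \<rho> by (simp add: unit_ball_vol_nonneg ennreal_mult' ennreal_of_nat_eq_real_of_nat mult.assoc)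
  finally show ?thesis .
qed

lemma obtain_dominant_coordinate:
  fixes a :: "'a::euclidean_space"
  assumes "a \<noteq> 0"
  obtains k where "k \<in> Basis" "\<And>i. i \<in> Basis \<Longrightarrow> \<bar>a \<bullet> i\<bar> \<le> \<bar>a \<bullet> k\<bar>" "a \<bullet> k \<noteq> 0"
proof -
  obtain k where k: "k \<in> Basis" and dom: "\<And>i. i \<in> Basis \<Longrightarrow> \<bar>a \<bullet> i\<bar> \<le> \<bar>a \<bullet> k\<bar>"
    using ex_is_arg_min_if_finite[OF finite_Basis nonempty_Basis, of "\<lambda>i. - \<bar>a \<bullet> i\<bar>"]
    by (fastforce simp: is_arg_min_linorder)
  moreover have "a \<bullet> k \<noteq> 0"
  proof
    assume "a \<bullet> k = 0"
    then have "\<forall>i\<in>Basis. a \<bullet> i = 0"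
      using dom by (metis abs_0 abs_le_zero_iff)
    then show False
      using assms by (simp add: euclidean_all_zero_iff)
  qed
  ultimately show thesis
    using that by blast
qed

(* As k is a dominant coordinate of the normal a, the k-th coordinate of z is controlled by the others. *)
lemma norm_le_on_hyperplane_through_0:
  fixes a z :: "'a::euclidean_space"
  assumes k: "k \<in> Basis" "\<And>i. i \<in> Basis \<Longrightarrow> \<bar>a \<bullet> i\<bar> \<le> \<bar>a \<bullet> k\<bar>" "a \<bullet> k \<noteq> 0"
    and z: "a \<bullet> z = 0" "\<And>i. i \<in> Basis - {k} \<Longrightarrow> \<bar>z \<bullet> i\<bar> \<le> \<epsilon>"
    and \<epsilon>: "0 \<le> \<epsilon>"
  shows "norm z \<le> real DIM('a) ^ 2 * \<epsilon>"
proof -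
  have "(a \<bullet> k) * (z \<bullet> k) + (\<Sum>i\<in>Basis - {k}. (a \<bullet> i) * (z \<bullet> i)) = 0"
    using z(1) euclidean_inner[of a z] k(1) by (simp add: sum.remove)
  then have "\<bar>a \<bullet> k\<bar> * \<bar>z \<bullet> k\<bar> = \<bar>\<Sum>i\<in>Basis - {k}. (a \<bullet> i) * (z \<bullet> i)\<bar>"
    by (metis abs_minus_cancel abs_mult add_eq_0_iff)
  also have "\<dots> \<le> (\<Sum>i\<in>Basis - {k}. \<bar>a \<bullet> i\<bar> * \<bar>z \<bullet> i\<bar>)"
    by (rule order_trans[OF sum_abs]) (simp add: abs_mult)
  also have "\<dots> \<le> (\<Sum>i\<in>Basis - {k}. \<bar>a \<bullet> k\<bar> * \<epsilon>)"
    using k(2) z(2) by (intro sum_mono mult_mono) auto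
  also have "\<dots> \<le> \<bar>a \<bullet> k\<bar> * (real DIM('a) * \<epsilon>)"
    using k(1) \<epsilon> by (simp add: card_Diff_singleton algebra_simps)
  finally have "\<bar>z \<bullet> k\<bar> \<le> real DIM('a) * \<epsilon>"
    using k(3) by simp
  moreover have "\<epsilon> \<le> real DIM('a) * \<epsilon>"
    using \<epsilon> by (simp add: DIM_positive mult_le_cancel_right1 Suc_le_eq)
  ultimately have coord: "\<bar>z \<bullet> i\<bar> \<le> real DIM('a) * \<epsilon>" if "i \<in> Basis" for i
    using z(2)[of i] that by (cases "i = k") auto
  have "norm z \<le> (\<Sum>i\<in>Basis. \<bar>z \<bullet> i\<bar>)"
    by (rule norm_le_l1)
  also have "\<dots> \<le> (\<Sum>i\<in>(Basis::'a set). real DIM('a) * \<epsilon>)"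
    using coord by (intro sum_mono)
  also have "\<dots> = real DIM('a) ^ 2 * \<epsilon>"
    by (simp add: power2_eq_square)
  finally show ?thesis .
qed

definition hyperplane_cell :: "'a::euclidean_space \<Rightarrow> real \<Rightarrow> 'a \<Rightarrow> real \<Rightarrow> ('a \<Rightarrow> int) \<Rightarrow> 'a set"
  where "hyperplane_cell a b k \<epsilon> \<kappa> =
    {x. a \<bullet> x = b \<and> (\<forall>i\<in>Basis - {k}. \<kappa> i * \<epsilon> \<le> x \<bullet> i \<and> x \<bullet> i \<le> (\<kappa> i + 1) * \<epsilon>)}"

lemma hyperplane_cell_bounded_diameter_le:
  fixes a :: "'a::euclidean_space"
  assumes k: "k \<in> Basis" "\<And>i. i \<in> Basis \<Longrightarrow> \<bar>a \<bullet> i\<bar> \<le> \<bar>a \<bullet> k\<bar>" "a \<bullet> k \<noteq> 0"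
    and \<epsilon>: "0 \<le> \<epsilon>"
  shows "bounded (hyperplane_cell a b k \<epsilon> \<kappa>) \<and> diameter (hyperplane_cell a b k \<epsilon> \<kappa>) \<le> real DIM('a) ^ 2 * \<epsilon>"
proof -
  have dist: "norm (x - y) \<le> real DIM('a) ^ 2 * \<epsilon>"
    if "x \<in> hyperplane_cell a b k \<epsilon> \<kappa>" "y \<in> hyperplane_cell a b k \<epsilon> \<kappa>" for x y
  proof (rule norm_le_on_hyperplane_through_0[OF k _ _ \<epsilon>])
    show "a \<bullet> (x - y) = 0"
      using that by (simp add: hyperplane_cell_def inner_diff_right)
    show "\<bar>(x - y) \<bullet> i\<bar> \<le> \<epsilon>" if "i \<in> Basis - {k}" for i
    proof -
      have "\<kappa> i * \<epsilon> \<le> x \<bullet> i" "x \<bullet> i \<le> (\<kappa> i + 1) * \<epsilon>"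
        "\<kappa> i * \<epsilon> \<le> y \<bullet> i" "y \<bullet> i \<le> (\<kappa> i + 1) * \<epsilon>"
        using \<open>i \<in> Basis - {k}\<close> \<open>x \<in> _\<close> \<open>y \<in> _\<close> by (auto simp: hyperplane_cell_def)
      then show ?thesis
        by (simp add: inner_diff_left abs_le_iff algebra_simps)
    qed
  qed
  then have "bounded (hyperplane_cell a b k \<epsilon> \<kappa>)"
    unfolding bounded_two_points dist_norm by blast
  moreover have "diameter (hyperplane_cell a b k \<epsilon> \<kappa>) \<le> real DIM('a) ^ 2 * \<epsilon>"
    using dist \<epsilon> by (intro diameter_le) auto
  ultimately show ?thesis ..
qed

lemma hyperplane_cball_subset_cells:
  fixes a :: "'a::euclidean_space" and \<epsilon> R :: real and N :: int
  assumes \<epsilon>: "0 < \<epsilon>" and N: "R < \<epsilon> * N"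
  shows "{x. a \<bullet> x = b} \<inter> cball 0 R \<subseteq>
    (\<Union>\<kappa>\<in>(Basis - {k}) \<rightarrow>\<^sub>E {-N..N-1}. hyperplane_cell a b k \<epsilon> \<kappa>)"
proof
  fix x assume x: "x \<in> {x. a \<bullet> x = b} \<inter> cball 0 R"
  define \<kappa> where "\<kappa> = restrict (\<lambda>i. \<lfloor>x \<bullet> i / \<epsilon>\<rfloor>) (Basis - {k})"
  have "-N \<le> \<lfloor>x \<bullet> i / \<epsilon>\<rfloor> \<and> \<lfloor>x \<bullet> i / \<epsilon>\<rfloor> < N" if "i \<in> Basis" for i
  proof -
    have "\<bar>x \<bullet> i\<bar> < \<epsilon> * N"
      using Basis_le_norm[OF that, of x] x N by simp
    then have "-N < x \<bullet> i / \<epsilon> \<and> x \<bullet> i / \<epsilon> < N"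
      using \<epsilon> by (auto simp: pos_less_divide_eq pos_divide_less_eq abs_less_iff mult.commute[of _ \<epsilon>])
    then show ?thesis
      by (simp add: le_floor_iff floor_less_iff)
  qed
  then have "\<kappa> \<in> (Basis - {k}) \<rightarrow>\<^sub>E {-N..N-1}"
    by (auto simp: \<kappa>_def)
  moreover have "\<lfloor>x \<bullet> i / \<epsilon>\<rfloor> * \<epsilon> \<le> x \<bullet> i \<and> x \<bullet> i \<le> (\<lfloor>x \<bullet> i / \<epsilon>\<rfloor> + 1) * \<epsilon>" for i
    using \<epsilon> real_of_int_floor_add_one_ge[of "x \<bullet> i / \<epsilon>"]
    by (simp add: pos_le_divide_eq[symmetric] pos_divide_le_eq[symmetric])
  then have "x \<in> hyperplane_cell a b k \<epsilon> \<kappa>"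
    using x by (simp add: hyperplane_cell_def \<kappa>_def)
  ultimately show "x \<in> (\<Union>\<kappa>\<in>(Basis - {k}) \<rightarrow>\<^sub>E {-N..N-1}. hyperplane_cell a b k \<epsilon> \<kappa>)"
    by blast
qed

lemma hausdorff_pre_hyperplane_cball_le:
  fixes a :: "'a::euclidean_space" and \<epsilon> R :: real and N :: int
  assumes a: "a \<noteq> 0" and \<epsilon>: "0 < \<epsilon>" "real DIM('a) ^ 2 * \<epsilon> \<le> \<delta>"
    and N: "0 \<le> N" "R < \<epsilon> * N"
  shows "hausdorff_pre (DIM('a) - 1) \<delta> ({x. a \<bullet> x = b} \<inter> cball 0 R)
    \<le> ennreal (unit_ball_vol (DIM('a) - 1) * (N * real DIM('a) ^ 2 * \<epsilon>) ^ (DIM('a) - 1))"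
proof -
  obtain k where k: "k \<in> Basis" "\<And>i. i \<in> Basis \<Longrightarrow> \<bar>a \<bullet> i\<bar> \<le> \<bar>a \<bullet> k\<bar>" "a \<bullet> k \<noteq> 0"
    using obtain_dominant_coordinate[OF a] by metis
  define s where "s = DIM('a) - 1"
  define D where "D = real DIM('a) ^ 2"
  define F where "F = (Basis - {k}) \<rightarrow>\<^sub>E {-N..N-1}"
  have "card F = nat (2 * N) ^ s"
    using k(1) by (simp add: F_def card_PiE card_Diff_singleton s_def)
  then have card: "real (card F) = (2 * real_of_int N) ^ s"
    using N(1) by simp
  have "hausdorff_pre s \<delta> ({x. a \<bullet> x = b} \<inter> cball 0 R)
      \<le> ennreal (real (card F) * unit_ball_vol s * (D * \<epsilon> / 2) ^ s)"
    unfolding F_def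
  proof (rule hausdorff_pre_le_finite_cover[OF _ hyperplane_cball_subset_cells[OF \<epsilon>(1) N(2)]])
    show "bounded (hyperplane_cell a b k \<epsilon> \<kappa>) \<and> diameter (hyperplane_cell a b k \<epsilon> \<kappa>) \<le> D * \<epsilon>" for \<kappa>
      unfolding D_def using hyperplane_cell_bounded_diameter_le[OF k] \<epsilon>(1) by simp
  qed (use \<epsilon> in \<open>auto simp: D_def intro: finite_PiE\<close>)
  also have "real (card F) * unit_ball_vol s * (D * \<epsilon> / 2) ^ s = unit_ball_vol s * (N * D * \<epsilon>) ^ s"
  proof -
    have "(2 * real_of_int N) ^ s * (D * \<epsilon> / 2) ^ s = (N * D * \<epsilon>) ^ s"
      unfolding power_mult_distrib[symmetric] by (simp add: mult.assoc)
    then show ?thesis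
      unfolding card by (simp only: mult_ac)
  qed
  finally show ?thesis
    by (simp add: s_def D_def)
qed

lemma hausdorff_outer_hyperplane_cball_le:
  fixes a :: "'a::euclidean_space" and R :: real
  assumes a: "a \<noteq> 0" and R: "0 < R"
  shows "hausdorff_outer (DIM('a) - 1) ({x. a \<bullet> x = b} \<inter> cball 0 R)
    \<le> ennreal (unit_ball_vol (DIM('a) - 1) * (3 * real DIM('a) ^ 2 * R) ^ (DIM('a) - 1))"
  unfolding hausdorff_outer_def
proof (rule SUP_least)
  fix \<delta> :: real assume "\<delta> \<in> {0<..}"
  define D where "D = real DIM('a) ^ 2"
  define \<epsilon> where "\<epsilon> = min R (\<delta> / D)"
  define N where "N = \<lceil>R / \<epsilon>\<rceil> + 1"
  have D: "1 \<le> D"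
    by (simp add: D_def DIM_positive Suc_le_eq)
  have \<epsilon>: "0 < \<epsilon>" "\<epsilon> \<le> R" "D * \<epsilon> \<le> \<delta>"
    using R \<open>\<delta> \<in> {0<..}\<close> D by (auto simp: \<epsilon>_def min_def field_simps)
  have "0 < R / \<epsilon>" "R / \<epsilon> < N" "N \<le> R / \<epsilon> + 2"
    using R \<epsilon> unfolding N_def by simp_all linarith+
  then have N: "0 \<le> N" "R < \<epsilon> * N" "N * \<epsilon> \<le> 3 * R"
    using \<epsilon> of_int_0_le_iff[of N, where 'a = real] by (linarith, simp_all add: field_simps)
  have "hausdorff_pre (DIM('a) - 1) \<delta> ({x. a \<bullet> x = b} \<inter> cball 0 R)
      \<le> ennreal (unit_ball_vol (DIM('a) - 1) * (N * D * \<epsilon>) ^ (DIM('a) - 1))"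
    unfolding D_def using \<epsilon> by (intro hausdorff_pre_hyperplane_cball_le a N(1,2)) (simp_all add: D_def)
  also have "\<dots> \<le> ennreal (unit_ball_vol (DIM('a) - 1) * (3 * D * R) ^ (DIM('a) - 1))"
  proof (intro ennreal_leI mult_left_mono power_mono unit_ball_vol_nonneg)
    show "N * D * \<epsilon> \<le> 3 * D * R"
      using mult_left_mono[OF N(3), of D] D by (simp add: mult_ac)
    show "0 \<le> N * D * \<epsilon>"
      using N(1) D \<epsilon> by simp
  qed
  finally show "hausdorff_pre (DIM('a) - 1) \<delta> ({x. a \<bullet> x = b} \<inter> cball 0 R)
      \<le> ennreal (unit_ball_vol (DIM('a) - 1) * (3 * real DIM('a) ^ 2 * R) ^ (DIM('a) - 1))"
    by (simp add: D_def)
qed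

lemma emeasure_hausdorff_hyperplane_cball_le:
  fixes a :: "'a::euclidean_space" and R :: real
  assumes "a \<noteq> 0" "0 < R" "A \<subseteq> {x. a \<bullet> x = b} \<inter> cball 0 R"
  shows "emeasure (hausdorff_measure (DIM('a) - 1)) A
    \<le> ennreal (unit_ball_vol (DIM('a) - 1) * (3 * real DIM('a) ^ 2 * R) ^ (DIM('a) - 1))"
  using emeasure_hausdorff_le_outer hausdorff_outer_mono[OF assms(3)]
    hausdorff_outer_hyperplane_cball_le[OF assms(1,2)]
  by (blast intro: order_trans)

lemma le_suminf_levels:
  fixes c :: "nat \<Rightarrow> ennreal"
  assumes c: "c \<longlonglongrightarrow> 0" and y: "y \<le> c 0"
  shows "y \<le> (\<Sum>n. c n * of_bool (c (Suc n) < y))"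
proof (cases "y = 0")
  case False
  then have "\<forall>\<^sub>F n in sequentially. c n < y"
    using c by (simp add: order_tendsto_iff zero_less_iff_neq_zero)
  then have ex: "\<exists>n. c (Suc n) < y"
    by (metis eventually_sequentially le_SucI order_refl)
  define m where "m = (LEAST n. c (Suc n) < y)"
  have m: "c (Suc m) < y"
    unfolding m_def by (rule LeastI_ex[OF ex])
  have "y \<le> c m"
  proof (cases m)
    case (Suc m')
    then show ?thesis
      using not_less_Least[of m' "\<lambda>n. c (Suc n) < y"] by (simp add: m_def not_less)
  qed (use y in simp)
  also have "\<dots> \<le> (\<Sum>n. c n * of_bool (c (Suc n) < y))"
    using sum_le_suminf[OF summableI, of "{m}" "\<lambda>n. c n * of_bool (c (Suc n) < y)"] m
    by simp
  finally show ?thesis .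
qed simp

(* u need not be measurable: the bound is proved for every simple function below u, whose level
   sets are measurable. *)
lemma nn_integral_le_suminf_levels:
  fixes u :: "'a \<Rightarrow> ennreal" and c \<mu> :: "nat \<Rightarrow> ennreal"
  assumes c: "c \<longlonglongrightarrow> 0" and u: "\<And>x. x \<in> space M \<Longrightarrow> u x \<le> c 0"
    and level: "\<And>n x. x \<in> space M \<Longrightarrow> c (Suc n) < u x \<Longrightarrow> x \<in> E n"
    and \<mu>: "\<And>n A. A \<in> sets M \<Longrightarrow> A \<subseteq> E n \<Longrightarrow> emeasure M A \<le> \<mu> n"
  shows "(\<integral>\<^sup>+ x. u x \<partial>M) \<le> (\<Sum>n. c n * \<mu> n)"
  unfolding nn_integral_def
proof (rule SUP_least, clarify)
  fix g assume g: "simple_function M g" "g \<le> u"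
  define A where "A n = {x \<in> space M. c (Suc n) < g x}" for n
  have A: "A n \<in> sets M" for n
    using borel_measurable_simple_function[OF g(1)] unfolding A_def by measurable
  have "g x \<le> (\<Sum>n. c n * indicator (A n) x)" if "x \<in> space M" for x
  proof -
    have "g x \<le> c 0"
      using le_funD[OF g(2)] u[OF that] by (rule order_trans)
    then show ?thesis
      using le_suminf_levels[OF c, of "g x"] that by (simp add: A_def indicator_def)
  qed
  then have "integral\<^sup>S M g \<le> (\<integral>\<^sup>+ x. (\<Sum>n. c n * indicator (A n) x) \<partial>M)"
    by (simp add: nn_integral_eq_simple_integral[OF g(1), symmetric] nn_integral_mono)
  also have "\<dots> = (\<Sum>n. c n * emeasure M (A n))"
    using A by (simp add: nn_integral_suminf nn_integral_cmult_indicator)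
  also have "\<dots> \<le> (\<Sum>n. c n * \<mu> n)"
  proof (intro suminf_le mult_left_mono \<mu>[OF A])
    fix n show "A n \<subseteq> E n"
      using level le_funD[OF g(2)] by (force simp: A_def intro: order_less_le_trans)
  qed auto
  finally show "integral\<^sup>S M g \<le> (\<Sum>n. c n * \<mu> n)" .
qed

lemma nn_integral_hyperplane_le_suminf:
  fixes f :: "'a::euclidean_space \<Rightarrow> real" and c :: "nat \<Rightarrow> real"
  assumes a: "a \<noteq> 0" and c: "c \<longlonglongrightarrow> 0" and f: "\<And>n x. real n \<le> norm x \<Longrightarrow> f x \<le> c n"
  shows "(\<integral>\<^sup>+ x. indicator {x. a \<bullet> x = b} x * ennreal (f x) \<partial>hausdorff_measure (DIM('a) - 1))
    \<le> (\<Sum>n. ennreal (c n * (unit_ball_vol (DIM('a) - 1) * (3 * real DIM('a) ^ 2 * Suc n) ^ (DIM('a) - 1))))"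
proof -
  have "(\<integral>\<^sup>+ x. indicator {x. a \<bullet> x = b} x * ennreal (f x) \<partial>hausdorff_measure (DIM('a) - 1))
    \<le> (\<Sum>n. ennreal (c n) * ennreal (unit_ball_vol (DIM('a) - 1) * (3 * real DIM('a) ^ 2 * Suc n) ^ (DIM('a) - 1)))"
  proof (rule nn_integral_le_suminf_levels[where E = "\<lambda>n. {x. a \<bullet> x = b} \<inter> cball 0 (Suc n)"])
    show "(\<lambda>n. ennreal (c n)) \<longlonglongrightarrow> 0"
      using tendsto_ennrealI[OF c] by simp
    show "indicator {x. a \<bullet> x = b} x * ennreal (f x) \<le> ennreal (c 0)" for x
      using f[of 0 x] by (auto simp: indicator_def intro: ennreal_leI)
    show "x \<in> {x. a \<bullet> x = b} \<inter> cball 0 (Suc n)"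
      if "ennreal (c (Suc n)) < indicator {x. a \<bullet> x = b} x * ennreal (f x)" for n x
    proof -
      have "indicator {x. a \<bullet> x = b} x * ennreal (f x) \<le> ennreal (f x)"
        by (simp add: indicator_def)
      then have "ennreal (c (Suc n)) < ennreal (f x)"
        using that by order
      then have "\<not> real (Suc n) \<le> norm x"
        using f[of "Suc n" x] ennreal_leI[of "f x" "c (Suc n)"] by auto
      then show ?thesis
        using that by (cases "a \<bullet> x = b") auto
    qed
  qed (rule emeasure_hausdorff_hyperplane_cball_le[OF a, where b = b], auto)
  then show ?thesis
    by (simp add: ennreal_mult'' unit_ball_vol_nonneg)
qed

lemma nn_integral_hyperplane_uniformly_bounded:
  fixes f :: "'a::euclidean_space \<Rightarrow> real" and c :: "nat \<Rightarrow> real"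
  assumes c: "\<And>n. 0 \<le> c n" and f: "\<And>n x. real n \<le> norm x \<Longrightarrow> f x \<le> c n"
    and summ: "summable (\<lambda>n. real (Suc n) ^ (DIM('a) - 1) * c n)"
  shows "\<exists>C>0. \<forall>(a::'a) b. a \<noteq> 0 \<longrightarrow>
    (\<integral>\<^sup>+ x. indicator {x. a \<bullet> x = b} x * ennreal (f x) \<partial>hausdorff_measure (DIM('a) - 1)) \<le> ennreal C"
proof -
  define K where "K n = unit_ball_vol (DIM('a) - 1) * (3 * real DIM('a) ^ 2 * Suc n) ^ (DIM('a) - 1)" for n
  have K: "0 \<le> K n" for n
    by (simp add: K_def unit_ball_vol_nonneg)
  have "c n \<le> real (Suc n) ^ (DIM('a) - 1) * c n" for n
    using c[of n] by (simp add: mult_le_cancel_right1)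
  then have c_lim: "c \<longlonglongrightarrow> 0"
    by (intro tendsto_sandwich[OF _ _ tendsto_const summable_LIMSEQ_zero[OF summ]]) (simp_all add: c)
  have "summable (\<lambda>n. (unit_ball_vol (DIM('a) - 1) * (3 * real DIM('a) ^ 2) ^ (DIM('a) - 1)) *
      (real (Suc n) ^ (DIM('a) - 1) * c n))"
    using summ by (rule summable_mult)
  then have summ_K: "summable (\<lambda>n. c n * K n)"
    by (simp add: K_def power_mult_distrib mult_ac)
  define C where "C = 1 + (\<Sum>n. c n * K n)"
  have "0 < C"
    unfolding C_def using suminf_nonneg[OF summ_K] c K by (simp add: add_pos_nonneg)
  moreover have "(\<integral>\<^sup>+ x. indicator {x. a \<bullet> x = b} x * ennreal (f x) \<partial>hausdorff_measure (DIM('a) - 1))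
      \<le> ennreal C" if "a \<noteq> 0" for a :: 'a and b
  proof -
    have "(\<integral>\<^sup>+ x. indicator {x. a \<bullet> x = b} x * ennreal (f x) \<partial>hausdorff_measure (DIM('a) - 1))
        \<le> (\<Sum>n. ennreal (c n * K n))"
      using nn_integral_hyperplane_le_suminf[OF that c_lim f] by (simp add: K_def)
    also have "\<dots> = ennreal (\<Sum>n. c n * K n)"
      using summ_K c K by (intro suminf_ennreal2) auto
    also have "\<dots> \<le> ennreal C"
      by (simp add: C_def ennreal_leI)
    finally show ?thesis .
  qed
  ultimately show ?thesis
    by blast
qed

theorem lemmaF2:
  fixes f :: "'a::euclidean_space \<Rightarrow> real"
  assumes meas: "f \<in> borel_measurable borel"
    and nonneg: "\<And>x. f x \<ge> 0"
    and bdd: "\<And>r::nat. r \<ge> 1 \<Longrightarrow> bdd_above (f ` {x. real r - 1 \<le> norm x})"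
    and summ: "summable (\<lambda>n::nat. real (Suc n) ^ (DIM('a) - 1) *
                   Sup (f ` {x. real (Suc n) - 1 \<le> norm x}))"
  shows "\<exists>C>0. \<forall>(a::'a) (b::real). a \<noteq> 0 \<longrightarrow>
           (\<integral>\<^sup>+ x. indicator {x. a \<bullet> x = b} x * ennreal (f x)
              \<partial>hausdorff_measure (DIM('a) - 1)) \<le> ennreal C"
proof -
  define c where "c n = Sup (f ` {x. real n \<le> norm x})" for n :: nat
  have f_le_c: "f x \<le> c n" if "real n \<le> norm x" for n x
    unfolding c_def using bdd[of "Suc n"] that by (intro cSup_upper) auto
  have c_nonneg: "0 \<le> c n" for n
  proof -
    obtain e :: 'a where "e \<in> Basis"
      using nonempty_Basis by blast
    then have "f (real n *\<^sub>R e) \<le> c n"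
      by (intro f_le_c) simp
    then show ?thesis
      using nonneg order_trans by blast
  qed
  have "summable (\<lambda>n. real (Suc n) ^ (DIM('a) - 1) * c n)"
    using summ by (simp add: c_def)
  then show ?thesis
    using nn_integral_hyperplane_uniformly_bounded[of c f] c_nonneg f_le_c by blast
qed

end
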